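(* Let $d_1$ be a positive integer, let $p_{10}<p_{11}<\cdots<p_{1d_1}$ and $p_{20}<p_{21}$ be real numbers (so $d_2=1$), and let $$S=\bigl\{(x_1,x_2,\mu)\in\mathbb{R}^2\times\mathbb{R} : \mu=x_1x_2,\ x_1\in\{p_{10},\dots,p_{1d_1}\},\ x_2\in\{p_{20},p_{21}\}\bigr\}.$$ Let $Q$ be the polyhedron of all $(x_1,x_2,\mu,\boldsymbol{z}_1,z_{21})\in\mathbb{R}^2\times\mathbb{R}\times\mathbb{R}^{d_1}\times\mathbb{R}$ satisfying $x_1=p_{10}+\sum_{j=1}^{d_1}(p_{1j}-p_{1,j-1})z_{1j}$, $1\ge z_{11}\ge\cdots\ge z_{1d_1}\ge 0$, $x_2=p_{20}+(p_{21}-p_{20})z_{21}$, $1\ge z_{21}\ge0$, and, for every $k\in\{0,1,\dots,d_1\}$, \begin{align*} \mu&\le p_{10}p_{20}+\textstyle\sum_{j=1}^{k}p_{20}(p_{1j}-p_{1,j-1})z_{1j}+p_{1k}(p_{21}-p_{20})z_{21}+\sum_{j=k+1}^{d_1}p_{21}(p_{1j}-p_{1,j-1})z_{1j},\\ \mu&\ge p_{10}p_{21}+\textstyle\sum_{j=1}^{k}p_{21}(p_{1j}-p_{1,j-1})z_{1j}+p_{1k}(p_{20}-p_{21})(1-z_{21})+\sum_{j=k+1}^{d_1}p_{20}(p_{1j}-p_{1,j-1})z_{1j}. \end{align*} Then $E=\{(x_1,x_2,\mu,\boldsymbol{z}_1,z_{21})\in Q:(\boldsymbol{z}_1,z_{21})\in\{0,1\}^{d_1+1}\}$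 is an ideal MIP formulation of $S$.
   Context: An MIP formulation of a set $S$ is a set $E=\{(\boldsymbol{x},\boldsymbol{y},\boldsymbol{z})\in Q:\boldsymbol{z}\in\{0,1\}^q\}$, $Q$ a polyhedron, whose projection onto the original variables $\boldsymbol{x}$ equals $S$. It is ideal if every vertex of the LP relaxation $Q$ has $\boldsymbol{z}\in\{0,1\}^q$. *)

theory Defs
  imports "HOL-Analysis.Analysis"
begin

text \<open>Points of R^2 x R x R^{d1} x R are represented as tuples
  (x1, x2, mu, z1, z21) where z1 :: nat => real carries the coordinates
  z1 1, ..., z1 d1 (all other coordinates of z1 are required to be 0 in Q).\<close>

type_synonym point = "real \<times> real \<times> real \<times> (nat \<Rightarrow> real) \<times> real"

definition comb :: "real \<Rightarrow> point \<Rightarrow> point \<Rightarrow> point" where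
  "comb t a b = (case a of (x1, x2, mu, z1, z21) \<Rightarrow> case b of (y1, y2, nu, w1, w21) \<Rightarrow>
     ((1 - t) * x1 + t * y1, (1 - t) * x2 + t * y2, (1 - t) * mu + t * nu,
      (\<lambda>j. (1 - t) * z1 j + t * w1 j), (1 - t) * z21 + t * w21))"

text \<open>Vertex (extreme point) of a set of points: not in the open segment between
  two distinct points of the set (this is what extreme_point_of unfolds to).\<close>
definition vertex_of :: "point \<Rightarrow> point set \<Rightarrow> bool" where
  "vertex_of v P \<longleftrightarrow> v \<in> P \<and>
     \<not> (\<exists>a\<in>P. \<exists>b\<in>P. \<exists>t. 0 < t \<and> t < 1 \<and> a \<noteq> b \<and> v = comb t a b)"

definition Qset :: "nat \<Rightarrow> (nat \<Rightarrow> real) \<Rightarrow> real \<Rightarrow> real \<Rightarrow> point set" where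
  "Qset d1 p1 p20 p21 = {(x1, x2, mu, z1, z21).
     (\<forall>j. (j = 0 \<or> j > d1) \<longrightarrow> z1 j = 0) \<and>
     x1 = p1 0 + (\<Sum>j=1..d1. (p1 j - p1 (j - 1)) * z1 j) \<and>
     z1 1 \<le> 1 \<and> (\<forall>j\<in>{1..<d1}. z1 j \<ge> z1 (j + 1)) \<and> z1 d1 \<ge> 0 \<and>
     x2 = p20 + (p21 - p20) * z21 \<and> z21 \<le> 1 \<and> z21 \<ge> 0 \<and>
     (\<forall>k\<in>{0..d1}.
        mu \<le> p1 0 * p20 + (\<Sum>j=1..k. p20 * (p1 j - p1 (j - 1)) * z1 j)
              + p1 k * (p21 - p20) * z21
              + (\<Sum>j=k+1..d1. p21 * (p1 j - p1 (j - 1)) * z1 j) \<and>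
        mu \<ge> p1 0 * p21 + (\<Sum>j=1..k. p21 * (p1 j - p1 (j - 1)) * z1 j)
              + p1 k * (p20 - p21) * (1 - z21)
              + (\<Sum>j=k+1..d1. p20 * (p1 j - p1 (j - 1)) * z1 j))}"

definition Sset :: "nat \<Rightarrow> (nat \<Rightarrow> real) \<Rightarrow> real \<Rightarrow> real \<Rightarrow> (real \<times> real \<times> real) set" where
  "Sset d1 p1 p20 p21 = {(x1, x2, mu). mu = x1 * x2 \<and> x1 \<in> p1 ` {0..d1} \<and> x2 \<in> {p20, p21}}"

definition binary_z :: "nat \<Rightarrow> point \<Rightarrow> bool" where
  "binary_z d1 v = (case v of (x1, x2, mu, z1, z21) \<Rightarrow>
     (\<forall>j\<in>{1..d1}. z1 j \<in> {0, 1}) \<and> z21 \<in> {0, 1})"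

definition MIP_set :: "nat \<Rightarrow> point set \<Rightarrow> point set" where
  "MIP_set d1 Q = {v \<in> Q. binary_z d1 v}"

definition proj_x :: "point \<Rightarrow> real \<times> real \<times> real" where
  "proj_x v = (case v of (x1, x2, mu, z1, z21) \<Rightarrow> (x1, x2, mu))"

definition is_MIP_formulation :: "(real \<times> real \<times> real) set \<Rightarrow> nat \<Rightarrow> point set \<Rightarrow> bool" where
  "is_MIP_formulation S d1 Q \<longleftrightarrow> proj_x ` MIP_set d1 Q = S"

definition is_ideal :: "nat \<Rightarrow> point set \<Rightarrow> bool" where
  "is_ideal d1 Q \<longleftrightarrow> (\<forall>v. vertex_of v Q \<longrightarrow> binary_z d1 v)"

end

theory Submission
  imports Defs
begin

(* Substituting x1 = p1 0 + \<Sum> gap p1 j * z j, the k-th upper bound on mu becomes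
   p20 * x1 + (p21 - p20) * (p1 0 * z21 + \<Sum>j. gap p1 j * (if j \<le> k then z21 else z j)),
   and the lower bound takes a similar form. At a binary point z is the unary code of some
   m \<le> d1, and the two bounds with k = m both equal x1 * x2; this gives the formulation.
   For ideality let v be a vertex with a fractional coordinate value c. If no bound on mu is
   tight, mu alone can be moved. If the k0-th upper bound is tight, then minimality of that bound
   among all k forces z21 \<le> z j for j \<le> k0 and z j \<le> z21 for j > k0. Shifting every coordinate
   of (z, z21) equal to c by \<plusminus>\<epsilon>, with \<epsilon> smaller than all gaps between coordinate values,
   preserves all these order relations, hence membership in Q with the same tight bound, so v is
   the midpoint of two points of Q. A tight lower bound reduces to a tight upper bound through
   the symmetry (x2, mu, z21) \<mapsto> (-x2, -mu, 1 - z21), which maps Q for (p20, p21) onto Q for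
   (-p21, -p20) and exchanges its upper and lower bounds. *)

definition gap :: "(nat \<Rightarrow> real) \<Rightarrow> nat \<Rightarrow> real" where
  "gap p j = p j - p (j - 1)"

definition incremental :: "nat \<Rightarrow> (nat \<Rightarrow> real) \<Rightarrow> (nat \<Rightarrow> real) \<Rightarrow> real" where
  "incremental d p z = p 0 + (\<Sum>j=1..d. gap p j * z j)"

lemma sum_gap: "(\<Sum>j=1..k. gap p j) = p k - p 0"
  by (induction k) (auto simp: gap_def)

lemma gap_pos:
  assumes "\<And>j. j < d \<Longrightarrow> p j < p (Suc j)" and "j \<in> {1..d}"
  shows "0 < gap p j"
  using assms(1)[of "j - 1"] assms(2) by (auto simp: gap_def)

lemma sum_if_le_split:
  fixes f g :: "nat \<Rightarrow> real"
  assumes "k \<le> d"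
  shows "(\<Sum>j=1..d. if j \<le> k then f j else g j) = (\<Sum>j=1..k. f j) + (\<Sum>j=k+1..d. g j)"
proof -
  have "{1..d} \<inter> {j. j \<le> k} = {1..k}" "{1..d} - {j. j \<le> k} = {k+1..d}"
    using assms by auto
  then show ?thesis by (simp add: sum.If_cases Diff_eq)
qed

lemma sum_scaled_gap: "(\<Sum>j\<in>A. c * (p j - p (j - 1)) * z j) = c * (\<Sum>j\<in>A. gap p j * z j)"
  by (simp add: gap_def sum_distrib_left mult.assoc)

definition upper_mu :: "nat \<Rightarrow> (nat \<Rightarrow> real) \<Rightarrow> real \<Rightarrow> real \<Rightarrow> nat \<Rightarrow> (nat \<Rightarrow> real) \<Rightarrow> real \<Rightarrow> real"
  where
  "upper_mu d p1 p20 p21 k z y = p20 * incremental d p1 z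
     + (p21 - p20) * (p1 0 * y + (\<Sum>j=1..d. gap p1 j * (if j \<le> k then y else z j)))"

definition lower_mu :: "nat \<Rightarrow> (nat \<Rightarrow> real) \<Rightarrow> real \<Rightarrow> real \<Rightarrow> nat \<Rightarrow> (nat \<Rightarrow> real) \<Rightarrow> real \<Rightarrow> real"
  where
  "lower_mu d p1 p20 p21 k z y = p20 * incremental d p1 z
     + (p21 - p20) * (p1 0 * y + (\<Sum>j=1..d. gap p1 j * (if j \<le> k then z j + y - 1 else 0)))"

lemma upper_mu_eq:
  assumes "k \<le> d"
  shows "p1 0 * p20 + (\<Sum>j=1..k. p20 * (p1 j - p1 (j - 1)) * z j) + p1 k * (p21 - p20) * y
      + (\<Sum>j=k+1..d. p21 * (p1 j - p1 (j - 1)) * z j) = upper_mu d p1 p20 p21 k z y"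
proof -
  have sum_if: "(\<Sum>j=1..d. gap p1 j * (if j \<le> k then y else z j))
      = (p1 k - p1 0) * y + (\<Sum>j=k+1..d. gap p1 j * z j)"
    using sum_if_le_split[OF assms, of "\<lambda>j. gap p1 j * y" "\<lambda>j. gap p1 j * z j"] sum_gap[of p1 k]
    by (simp add: if_distrib sum_distrib_right[symmetric])
  have sum_split: "(\<Sum>j=1..d. gap p1 j * z j) = (\<Sum>j=1..k. gap p1 j * z j) + (\<Sum>j=k+1..d. gap p1 j * z j)"
    using sum_if_le_split[OF assms, of "\<lambda>j. gap p1 j * z j" "\<lambda>j. gap p1 j * z j"] by simp
  show ?thesis
    unfolding sum_scaled_gap upper_mu_def incremental_def sum_if sum_split by (simp add: algebra_simps)
qed

lemma lower_mu_eq: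
  assumes "k \<le> d"
  shows "p1 0 * p21 + (\<Sum>j=1..k. p21 * (p1 j - p1 (j - 1)) * z j) + p1 k * (p20 - p21) * (1 - y)
      + (\<Sum>j=k+1..d. p20 * (p1 j - p1 (j - 1)) * z j) = lower_mu d p1 p20 p21 k z y"
proof -
  have "(\<Sum>j=1..d. gap p1 j * (if j \<le> k then z j + y - 1 else 0))
      = (\<Sum>j=1..k. gap p1 j * (z j + y - 1))"
    using sum_if_le_split[OF assms, of "\<lambda>j. gap p1 j * (z j + y - 1)" "\<lambda>_. 0"]
    by (simp add: if_distrib cong: if_cong)
  also have "\<dots> = (\<Sum>j=1..k. gap p1 j * z j) + (\<Sum>j=1..k. gap p1 j) * (y - 1)"
    by (simp add: algebra_simps sum.distrib sum_distrib_left sum_subtractf)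
  finally have sum_if: "(\<Sum>j=1..d. gap p1 j * (if j \<le> k then z j + y - 1 else 0))
      = (\<Sum>j=1..k. gap p1 j * z j) + (p1 k - p1 0) * (y - 1)"
    by (simp only: sum_gap)
  have sum_split: "(\<Sum>j=1..d. gap p1 j * z j) = (\<Sum>j=1..k. gap p1 j * z j) + (\<Sum>j=k+1..d. gap p1 j * z j)"
    using sum_if_le_split[OF assms, of "\<lambda>j. gap p1 j * z j" "\<lambda>j. gap p1 j * z j"] by simp
  show ?thesis
    unfolding sum_scaled_gap lower_mu_def incremental_def sum_if sum_split by (simp add: algebra_simps)
qed

definition staircase :: "nat \<Rightarrow> (nat \<Rightarrow> real) \<Rightarrow> bool" where
  "staircase d z \<longleftrightarrow> (\<forall>j. (j = 0 \<or> d < j) \<longrightarrow> z j = 0) \<and>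
     z 1 \<le> 1 \<and> (\<forall>j\<in>{1..<d}. z (j + 1) \<le> z j) \<and> 0 \<le> z d"

lemma mem_Qset_iff:
  "(x1, x2, mu, z, y) \<in> Qset d p1 p20 p21 \<longleftrightarrow>
     staircase d z \<and> 0 \<le> y \<and> y \<le> 1 \<and> x1 = incremental d p1 z \<and> x2 = p20 + (p21 - p20) * y \<and>
     (\<forall>k\<in>{0..d}. lower_mu d p1 p20 p21 k z y \<le> mu \<and> mu \<le> upper_mu d p1 p20 p21 k z y)"
  unfolding Qset_def staircase_def incremental_def
  using upper_mu_eq lower_mu_eq by (auto simp: gap_def)

lemma staircase_antimono:
  assumes "staircase d z" and "1 \<le> i" "i \<le> j" "j \<le> d"
  shows "z j \<le> z i"
  using assms(3,4)
proof (induction j rule: dec_induct)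
  case (step n)
  then have "z (n + 1) \<le> z n"
    using assms(1,2) by (simp add: staircase_def)
  with step show ?case by simp
qed simp

lemma staircase_outside:
  assumes "staircase d z" "j \<notin> {1..d}"
  shows "z j = 0"
  using assms by (cases "j = 0") (auto simp: staircase_def)

lemma staircase_bounds:
  assumes "staircase d z"
  shows "0 \<le> z j" "z j \<le> 1"
proof -
  have "0 \<le> z j \<and> z j \<le> 1"
  proof (cases "j \<in> {1..d}")
    case True
    then show ?thesis
      using assms staircase_antimono[OF assms, of 1 j] staircase_antimono[OF assms, of j d]
      by (auto simp: staircase_def)
  next
    case False
    then show ?thesis using staircase_outside[OF assms] by simp
  qed
  then show "0 \<le> z j" "z j \<le> 1" by auto
qed

definition unary :: "nat \<Rightarrow> nat \<Rightarrow> real" where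
  "unary m j = (if j \<in> {1..m} then 1 else 0)"

lemma staircase_unary: "m \<le> d \<Longrightarrow> staircase d (unary m)"
  by (auto simp: staircase_def unary_def)

lemma incremental_unary:
  assumes "m \<le> d"
  shows "incremental d p (unary m) = p m"
proof -
  have "(\<Sum>j=1..d. gap p j * unary m j) = (\<Sum>j=1..m. gap p j)"
    using sum_if_le_split[OF assms, of "gap p" "\<lambda>_. 0"]
    by (simp add: unary_def if_distrib cong: if_cong)
  then show ?thesis using sum_gap[of p m] by (simp add: incremental_def)
qed

lemma staircase_binary_eq_unary:
  assumes "staircase d z" and binary: "\<forall>j\<in>{1..d}. z j \<in> {0, 1}"
  obtains m where "m \<le> d" "z = unary m"
proof -
  define m where "m = Max (insert 0 {j\<in>{1..d}. z j = 1})"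
  have "m \<le> d" "m = 0 \<or> z m = 1"
    using Max_in[of "insert 0 {j\<in>{1..d}. z j = 1}"] by (auto simp: m_def)
  have "z j = unary m j" for j
  proof (cases "j \<in> {1..d}")
    case True
    show ?thesis
    proof (cases "j \<le> m")
      case True
      with \<open>j \<in> {1..d}\<close> \<open>m = 0 \<or> z m = 1\<close> have "1 \<le> z j"
        using staircase_antimono[OF assms(1), of j m] \<open>m \<le> d\<close> by auto
      then show ?thesis
        using True \<open>j \<in> {1..d}\<close> staircase_bounds(2)[OF assms(1), of j] by (simp add: unary_def)
    next
      case False
      then have "z j \<noteq> 1"
        using \<open>j \<in> {1..d}\<close> Max_ge[of "insert 0 {j\<in>{1..d}. z j = 1}" j] by (auto simp: m_def)
      then show ?thesis using False binary \<open>j \<in> {1..d}\<close> by (auto simp: unary_def)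
    qed
  next
    case False
    then show ?thesis using staircase_outside[OF assms(1)] \<open>m \<le> d\<close> by (auto simp: unary_def)
  qed
  then show ?thesis using that \<open>m \<le> d\<close> by blast
qed

lemma bounds_at_unary:
  assumes gap: "\<forall>j\<in>{1..d}. 0 \<le> gap p1 j" and "p20 \<le> p21" "m \<le> d" "0 \<le> y" "y \<le> 1"
  shows "lower_mu d p1 p20 p21 k (unary m) y \<le> p1 m * (p20 + (p21 - p20) * y)"
    and "p1 m * (p20 + (p21 - p20) * y) \<le> upper_mu d p1 p20 p21 k (unary m) y"
    and "lower_mu d p1 p20 p21 m (unary m) y = p1 m * (p20 + (p21 - p20) * y)"
    and "upper_mu d p1 p20 p21 m (unary m) y = p1 m * (p20 + (p21 - p20) * y)"
proof -
  let ?S = "\<Sum>j=1..d. gap p1 j * (unary m j * y)"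
  have "?S = (\<Sum>j=1..d. gap p1 j * unary m j) * y"
    by (simp add: sum_distrib_right mult.assoc)
  also have "\<dots> = (p1 m - p1 0) * y"
    using incremental_unary[OF \<open>m \<le> d\<close>, of p1] by (simp add: incremental_def)
  finally have product: "p1 m * (p20 + (p21 - p20) * y)
      = p20 * incremental d p1 (unary m) + (p21 - p20) * (p1 0 * y + ?S)"
    by (simp add: incremental_unary[OF \<open>m \<le> d\<close>] algebra_simps)
  have "(\<Sum>j=1..d. gap p1 j * (if j \<le> k then unary m j + y - 1 else 0)) \<le> ?S"
    using gap \<open>0 \<le> y\<close> \<open>y \<le> 1\<close> by (intro sum_mono mult_left_mono) (auto simp: unary_def)
  then show "lower_mu d p1 p20 p21 k (unary m) y \<le> p1 m * (p20 + (p21 - p20) * y)"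
    unfolding lower_mu_def product using \<open>p20 \<le> p21\<close> by (simp add: mult_left_mono)
  have "?S \<le> (\<Sum>j=1..d. gap p1 j * (if j \<le> k then y else unary m j))"
    using gap \<open>0 \<le> y\<close> \<open>y \<le> 1\<close> by (intro sum_mono mult_left_mono) (auto simp: unary_def)
  then show "p1 m * (p20 + (p21 - p20) * y) \<le> upper_mu d p1 p20 p21 k (unary m) y"
    unfolding upper_mu_def product using \<open>p20 \<le> p21\<close> by (simp add: mult_left_mono)
  have "(\<Sum>j=1..d. gap p1 j * (if j \<le> m then unary m j + y - 1 else 0)) = ?S"
    by (rule sum.cong) (auto simp: unary_def)
  then show "lower_mu d p1 p20 p21 m (unary m) y = p1 m * (p20 + (p21 - p20) * y)"
    unfolding lower_mu_def product by simp
  have "(\<Sum>j=1..d. gap p1 j * (if j \<le> m then y else unary m j)) = ?S"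
    by (rule sum.cong) (auto simp: unary_def)
  then show "upper_mu d p1 p20 p21 m (unary m) y = p1 m * (p20 + (p21 - p20) * y)"
    unfolding upper_mu_def product by simp
qed

lemma mem_MIP_set_Qset_iff:
  assumes gap: "\<forall>j\<in>{1..d}. 0 \<le> gap p1 j" and "p20 \<le> p21"
  shows "(x1, x2, mu, z, y) \<in> MIP_set d (Qset d p1 p20 p21) \<longleftrightarrow>
    (\<exists>m\<le>d. z = unary m \<and> x1 = p1 m) \<and> y \<in> {0, 1} \<and> x2 = p20 + (p21 - p20) * y \<and> mu = x1 * x2"
  (is "_ \<longleftrightarrow> ?binary_point")
proof
  assume "(x1, x2, mu, z, y) \<in> MIP_set d (Qset d p1 p20 p21)"
  then have mem: "(x1, x2, mu, z, y) \<in> Qset d p1 p20 p21"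
    and binary: "\<forall>j\<in>{1..d}. z j \<in> {0, 1}" "y \<in> {0, 1}"
    by (simp_all add: MIP_set_def binary_z_def)
  then have z: "staircase d z" and y: "0 \<le> y" "y \<le> 1"
    and x1: "x1 = incremental d p1 z" and x2: "x2 = p20 + (p21 - p20) * y"
    and bounds: "\<forall>k\<in>{0..d}. lower_mu d p1 p20 p21 k z y \<le> mu \<and> mu \<le> upper_mu d p1 p20 p21 k z y"
    by (simp_all add: mem_Qset_iff)
  obtain m where "m \<le> d" "z = unary m"
    using staircase_binary_eq_unary[OF z binary(1)] .
  moreover from this have "x1 = p1 m"
    using x1 incremental_unary by simp
  moreover from calculation have "mu = x1 * x2"
    using bounds bounds_at_unary(3,4)[OF gap \<open>p20 \<le> p21\<close> \<open>m \<le> d\<close> y] x2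
    by (metis atLeastAtMost_iff order_antisym zero_le)
  ultimately show ?binary_point
    using binary(2) x2 by blast
next
  assume ?binary_point
  then obtain m where m: "m \<le> d" "z = unary m" "x1 = p1 m"
    and y: "y \<in> {0, 1}" and x2: "x2 = p20 + (p21 - p20) * y" and mu: "mu = x1 * x2"
    by blast
  have "0 \<le> y" "y \<le> 1"
    using y by auto
  then have "(x1, x2, mu, z, y) \<in> Qset d p1 p20 p21"
    using m x2 mu staircase_unary[OF m(1)] incremental_unary[OF m(1)]
      bounds_at_unary(1,2)[OF gap \<open>p20 \<le> p21\<close> m(1)]
    by (simp add: mem_Qset_iff)
  moreover have "binary_z d (x1, x2, mu, z, y)"
    using m(2) y by (simp add: binary_z_def unary_def)
  ultimately show "(x1, x2, mu, z, y) \<in> MIP_set d (Qset d p1 p20 p21)"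
    by (simp add: MIP_set_def)
qed

lemma is_MIP_formulation_Qset:
  assumes "\<forall>j\<in>{1..d}. 0 \<le> gap p1 j" and "p20 \<le> p21"
  shows "is_MIP_formulation (Sset d p1 p20 p21) d (Qset d p1 p20 p21)"
  unfolding is_MIP_formulation_def
proof (intro equalityI subsetI)
  fix w assume "w \<in> proj_x ` MIP_set d (Qset d p1 p20 p21)"
  then obtain x1 x2 mu z y where "w = (x1, x2, mu)" "(x1, x2, mu, z, y) \<in> MIP_set d (Qset d p1 p20 p21)"
    by (auto simp: proj_x_def split: prod.splits)
  then show "w \<in> Sset d p1 p20 p21"
    unfolding mem_MIP_set_Qset_iff[OF assms] Sset_def by auto
next
  fix w assume "w \<in> Sset d p1 p20 p21"
  then obtain m x2 where "m \<le> d" "x2 \<in> {p20, p21}" and w: "w = (p1 m, x2, p1 m * x2)"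
    by (auto simp: Sset_def)
  define y :: real where "y = (if x2 = p20 then 0 else 1)"
  have "y \<in> {0, 1}" "x2 = p20 + (p21 - p20) * y"
    using \<open>x2 \<in> {p20, p21}\<close> by (auto simp: y_def)
  with \<open>m \<le> d\<close> have "(p1 m, x2, p1 m * x2, unary m, y) \<in> MIP_set d (Qset d p1 p20 p21)"
    unfolding mem_MIP_set_Qset_iff[OF assms] by blast
  then show "w \<in> proj_x ` MIP_set d (Qset d p1 p20 p21)"
    unfolding w by (rule rev_image_eqI) (simp add: proj_x_def)
qed

lemma lower_mu_le_upper_mu:
  assumes "\<forall>j\<in>{1..d}. 0 \<le> gap p1 j" "p20 \<le> p21" "staircase d z" "0 \<le> y" "y \<le> 1"
  shows "lower_mu d p1 p20 p21 k z y \<le> upper_mu d p1 p20 p21 k' z y"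
proof -
  have "(\<Sum>j=1..d. gap p1 j * (if j \<le> k then z j + y - 1 else 0))
      \<le> (\<Sum>j=1..d. gap p1 j * (if j \<le> k' then y else z j))"
    using assms staircase_bounds[OF assms(3)] by (intro sum_mono mult_left_mono) auto
  then show ?thesis
    unfolding lower_mu_def upper_mu_def using assms(2) by (simp add: mult_left_mono)
qed

lemma upper_mu_Suc:
  assumes "Suc k \<le> d"
  shows "upper_mu d p1 p20 p21 (Suc k) z y
    = upper_mu d p1 p20 p21 k z y + (p21 - p20) * gap p1 (Suc k) * (y - z (Suc k))"
proof -
  have "(\<Sum>j=1..d. gap p1 j * (if j \<le> Suc k then y else z j))
      = (\<Sum>j=1..d. gap p1 j * (if j \<le> k then y else z j)
          + (if j = Suc k then gap p1 (Suc k) * (y - z (Suc k)) else 0))"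
    by (rule sum.cong) (auto simp: algebra_simps)
  also have "\<dots> = (\<Sum>j=1..d. gap p1 j * (if j \<le> k then y else z j)) + gap p1 (Suc k) * (y - z (Suc k))"
    using assms by (simp add: sum.distrib)
  finally have sum_Suc: "(\<Sum>j=1..d. gap p1 j * (if j \<le> Suc k then y else z j))
      = (\<Sum>j=1..d. gap p1 j * (if j \<le> k then y else z j)) + gap p1 (Suc k) * (y - z (Suc k))" .
  show ?thesis
    unfolding upper_mu_def sum_Suc by (simp add: algebra_simps)
qed

definition splits_at :: "nat \<Rightarrow> nat \<Rightarrow> (nat \<Rightarrow> real) \<Rightarrow> real \<Rightarrow> bool" where
  "splits_at d k z y \<longleftrightarrow> (\<forall>j\<in>{1..d}. (j \<le> k \<longrightarrow> y \<le> z j) \<and> (k < j \<longrightarrow> z j \<le> y))"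

lemma upper_mu_le_if_splits_at:
  assumes "\<forall>j\<in>{1..d}. 0 \<le> gap p1 j" "p20 \<le> p21" "splits_at d k0 z y"
  shows "upper_mu d p1 p20 p21 k0 z y \<le> upper_mu d p1 p20 p21 k z y"
proof -
  have "(\<Sum>j=1..d. gap p1 j * (if j \<le> k0 then y else z j))
      \<le> (\<Sum>j=1..d. gap p1 j * (if j \<le> k then y else z j))"
    using assms(1,3) by (intro sum_mono mult_left_mono) (auto simp: splits_at_def)
  then show ?thesis
    unfolding upper_mu_def using assms(2) by (simp add: mult_left_mono)
qed

lemma splits_at_if_upper_mu_min:
  assumes gap: "\<forall>j\<in>{1..d}. 0 < gap p1 j" and "p20 < p21" "staircase d z" "k0 \<le> d"
    and min: "\<forall>k\<in>{0..d}. upper_mu d p1 p20 p21 k0 z y \<le> upper_mu d p1 p20 p21 k z y"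
  shows "splits_at d k0 z y"
  unfolding splits_at_def
proof (intro ballI conjI impI)
  fix j assume j: "j \<in> {1..d}"
  show "y \<le> z j" if jk: "j \<le> k0"
  proof -
    obtain k where k: "k0 = Suc k" using j jk by (cases k0) auto
    have "(p21 - p20) * gap p1 k0 * (y - z k0) \<le> 0"
    proof -
      have "upper_mu d p1 p20 p21 (Suc k) z y \<le> upper_mu d p1 p20 p21 k z y"
        using min k \<open>k0 \<le> d\<close> by auto
      then show ?thesis
        using upper_mu_Suc[of k d p1 p20 p21 z y] k \<open>k0 \<le> d\<close> by simp
    qed
    moreover have "0 < (p21 - p20) * gap p1 k0"
      using gap k \<open>k0 \<le> d\<close> \<open>p20 < p21\<close> by simp
    ultimately have "y \<le> z k0"
      by (metis diff_le_0_iff_le mult_le_cancel_left_pos mult_zero_right)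
    also have "z k0 \<le> z j"
      using staircase_antimono[OF \<open>staircase d z\<close>, of j k0] j jk \<open>k0 \<le> d\<close> by simp
    finally show ?thesis .
  qed
  show "z j \<le> y" if kj: "k0 < j"
  proof -
    have "upper_mu d p1 p20 p21 k0 z y \<le> upper_mu d p1 p20 p21 (Suc k0) z y"
      using min kj j by auto
    then have "0 \<le> (p21 - p20) * gap p1 (Suc k0) * (y - z (Suc k0))"
      using upper_mu_Suc[of k0 d p1 p20 p21 z y] kj j by simp
    moreover have "0 < (p21 - p20) * gap p1 (Suc k0)"
      using gap j kj \<open>p20 < p21\<close> by simp
    ultimately have "z (Suc k0) \<le> y"
      by (metis diff_ge_0_iff_ge mult_le_cancel_left_pos mult_zero_right)
    moreover have "z j \<le> z (Suc k0)"
      using staircase_antimono[OF \<open>staircase d z\<close>, of "Suc k0" j] j kj by simp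
    ultimately show ?thesis by simp
  qed
qed

definition upper_point :: "nat \<Rightarrow> (nat \<Rightarrow> real) \<Rightarrow> real \<Rightarrow> real \<Rightarrow> nat \<Rightarrow> (nat \<Rightarrow> real) \<Rightarrow> real \<Rightarrow> point"
  where
  "upper_point d p1 p20 p21 k z y =
     (incremental d p1 z, p20 + (p21 - p20) * y, upper_mu d p1 p20 p21 k z y, z, y)"

lemma upper_point_mem_Qset:
  assumes "\<forall>j\<in>{1..d}. 0 \<le> gap p1 j" "p20 \<le> p21"
    and "staircase d z" "0 \<le> y" "y \<le> 1" "splits_at d k0 z y"
  shows "upper_point d p1 p20 p21 k0 z y \<in> Qset d p1 p20 p21"
proof -
  have "\<forall>k\<in>{0..d}. lower_mu d p1 p20 p21 k z y \<le> upper_mu d p1 p20 p21 k0 z y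
      \<and> upper_mu d p1 p20 p21 k0 z y \<le> upper_mu d p1 p20 p21 k z y"
    using lower_mu_le_upper_mu[OF assms(1-5)] upper_mu_le_if_splits_at[OF assms(1,2,6)] by simp
  with assms(3-5) show ?thesis
    by (simp add: mem_Qset_iff upper_point_def)
qed

lemma comb_upper_point:
  "comb t (upper_point d p1 p20 p21 k z y) (upper_point d p1 p20 p21 k w y')
    = upper_point d p1 p20 p21 k (\<lambda>j. (1 - t) * z j + t * w j) ((1 - t) * y + t * y')"
proof -
  have incr: "incremental d p1 (\<lambda>j. (1 - t) * z j + t * w j)
      = (1 - t) * incremental d p1 z + t * incremental d p1 w"
    by (simp add: incremental_def sum_distrib_left sum.distrib[symmetric] algebra_simps)
  have sum_comb:
    "(\<Sum>j=1..d. gap p1 j * (if j \<le> k then (1 - t) * y + t * y' else (1 - t) * z j + t * w j))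
      = (1 - t) * (\<Sum>j=1..d. gap p1 j * (if j \<le> k then y else z j))
        + t * (\<Sum>j=1..d. gap p1 j * (if j \<le> k then y' else w j))"
    by (simp add: sum_distrib_left sum.distrib[symmetric] algebra_simps if_distrib cong: if_cong)
  have "upper_mu d p1 p20 p21 k (\<lambda>j. (1 - t) * z j + t * w j) ((1 - t) * y + t * y')
      = (1 - t) * upper_mu d p1 p20 p21 k z y + t * upper_mu d p1 p20 p21 k w y'"
    unfolding upper_mu_def incr sum_comb by (simp add: algebra_simps)
  with incr show ?thesis
    by (simp add: upper_point_def comb_def algebra_simps)
qed

lemma not_vertex_of_midpoint:
  assumes "a \<in> P" "b \<in> P" "a \<noteq> b" "v = comb (1/2) a b"
  shows "\<not> vertex_of v P"
proof -
  have "(0::real) < 1/2" "(1::real)/2 < 1" by simp_all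
  with assms show ?thesis unfolding vertex_of_def by blast
qed

lemma not_vertex_of_if_bounds_strict:
  assumes v: "(x1, x2, mu, z, y) \<in> Qset d p1 p20 p21"
    and strict: "\<forall>k\<in>{0..d}. lower_mu d p1 p20 p21 k z y < mu \<and> mu < upper_mu d p1 p20 p21 k z y"
  shows "\<not> vertex_of (x1, x2, mu, z, y) (Qset d p1 p20 p21)"
proof -
  define \<delta> where "\<delta> = Min ((\<lambda>k. upper_mu d p1 p20 p21 k z y - mu) ` {0..d}
      \<union> (\<lambda>k. mu - lower_mu d p1 p20 p21 k z y) ` {0..d})"
  have "0 < \<delta>"
    using strict by (auto simp: \<delta>_def)
  have slack: "\<delta> \<le> upper_mu d p1 p20 p21 k z y - mu" "\<delta> \<le> mu - lower_mu d p1 p20 p21 k z y"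
    if "k \<in> {0..d}" for k
    using that by (simp_all add: \<delta>_def)
  have shifted: "(x1, x2, mu + s, z, y) \<in> Qset d p1 p20 p21" if "\<bar>s\<bar> \<le> \<delta>" for s
  proof -
    have "- \<delta> \<le> s" "s \<le> \<delta>"
      using that by auto
    have "\<forall>k\<in>{0..d}. lower_mu d p1 p20 p21 k z y \<le> mu + s \<and> mu + s \<le> upper_mu d p1 p20 p21 k z y"
    proof
      fix k assume "k \<in> {0..d}"
      with slack[of k] \<open>- \<delta> \<le> s\<close> \<open>s \<le> \<delta>\<close>
      show "lower_mu d p1 p20 p21 k z y \<le> mu + s \<and> mu + s \<le> upper_mu d p1 p20 p21 k z y"
        by linarith
    qed
    with v show ?thesis
      by (simp add: mem_Qset_iff)
  qed
  have "(x1, x2, mu, z, y) = comb (1/2) (x1, x2, mu + - \<delta>, z, y) (x1, x2, mu + \<delta>, z, y)"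
    by (simp add: comb_def field_simps)
  then show ?thesis
    using shifted[of "- \<delta>"] shifted[of \<delta>] \<open>0 < \<delta>\<close> by (intro not_vertex_of_midpoint) auto
qed

definition shift_level :: "real \<Rightarrow> real \<Rightarrow> real \<Rightarrow> real" where
  "shift_level c s t = (if t = c then t + s else t)"

lemma shift_level_midpoint: "(1 - 1/2) * shift_level c (- s) t + 1/2 * shift_level c s t = t"
  by (simp add: shift_level_def field_simps)

lemma mono_on_shift_level:
  assumes "finite V"
  obtains \<epsilon> where "0 < \<epsilon>" "\<And>s. \<bar>s\<bar> \<le> \<epsilon> \<Longrightarrow> mono_on V (shift_level c s)"
proof -
  define \<epsilon> where "\<epsilon> = Min (insert 1 ((\<lambda>(a, b). b - a) ` {(a, b) \<in> V \<times> V. a < b}))"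
  have fin: "finite ((\<lambda>(a, b). b - a) ` {(a, b) \<in> V \<times> V. a < b})"
    using assms by (auto intro: finite_subset[of _ "V \<times> V"])
  have "0 < \<epsilon>"
    unfolding \<epsilon>_def using fin by auto
  moreover have "\<epsilon> \<le> b - a" if "a \<in> V" "b \<in> V" "a < b" for a b
    unfolding \<epsilon>_def using fin that by (intro Min_le) force+
  ultimately show ?thesis
    by (intro that[of \<epsilon>] mono_onI) (fastforce simp: shift_level_def abs_le_iff order.order_iff_strict)+
qed

lemma staircase_comp:
  assumes "staircase d z" and g: "mono_on (insert 0 (insert 1 (range z))) g" "g 0 = 0" "g 1 = 1"
  shows "staircase d (g \<circ> z)"
  using assms(1) g(2,3) mono_onD[OF g(1)] unfolding staircase_def
  by (metis comp_apply insertCI rangeI)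

lemma splits_at_comp:
  assumes "splits_at d k z y" "mono_on V g" "y \<in> V" "range z \<subseteq> V"
  shows "splits_at d k (g \<circ> z) (g y)"
  using assms unfolding splits_at_def by (metis comp_apply mono_onD rangeI subsetD)

lemma upper_point_comp_mem_Qset:
  assumes "\<forall>j\<in>{1..d}. 0 \<le> gap p1 j" "p20 \<le> p21"
    and z: "staircase d z" and y: "0 \<le> y" "y \<le> 1" and split: "splits_at d k0 z y"
    and g: "mono_on (insert 0 (insert 1 (insert y (range z)))) g" "g 0 = 0" "g 1 = 1"
  shows "upper_point d p1 p20 p21 k0 (g \<circ> z) (g y) \<in> Qset d p1 p20 p21"
proof (rule upper_point_mem_Qset[OF assms(1,2)])
  show "staircase d (g \<circ> z)"
    using z g mono_on_subset[OF g(1)] by (intro staircase_comp) (auto simp: subset_insertI2)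
  show "0 \<le> g y" "g y \<le> 1"
    using y g mono_onD[OF g(1), of 0 y] mono_onD[OF g(1), of y 1] by auto
  show "splits_at d k0 (g \<circ> z) (g y)"
    using split g(1) by (rule splits_at_comp) auto
qed

lemma not_vertex_of_if_upper_mu_tight:
  assumes gap: "\<forall>j\<in>{1..d}. 0 < gap p1 j" and "p20 < p21"
    and v: "(x1, x2, mu, z, y) \<in> Qset d p1 p20 p21"
    and fractional: "\<not> binary_z d (x1, x2, mu, z, y)"
    and "k0 \<le> d" and tight: "mu = upper_mu d p1 p20 p21 k0 z y"
  shows "\<not> vertex_of (x1, x2, mu, z, y) (Qset d p1 p20 p21)"
proof -
  let ?P = "upper_point d p1 p20 p21 k0"
  have z: "staircase d z" and y: "0 \<le> y" "y \<le> 1"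
    and v_eq: "(x1, x2, mu, z, y) = ?P z y"
    and upper: "\<forall>k\<in>{0..d}. mu \<le> upper_mu d p1 p20 p21 k z y"
    using v tight by (auto simp: mem_Qset_iff upper_point_def)
  have split: "splits_at d k0 z y"
    using splits_at_if_upper_mu_min[OF gap \<open>p20 < p21\<close> z \<open>k0 \<le> d\<close>] upper tight by simp
  obtain c where c: "c \<noteq> 0" "c \<noteq> 1" "c = y \<or> c \<in> z ` {1..d}"
    using fractional by (auto simp: binary_z_def)
  define V where "V = insert 0 (insert 1 (insert y (range z)))"
  have "range z \<subseteq> insert 0 (z ` {1..d})"
    using staircase_outside[OF z] by blast
  then have "finite V"
    unfolding V_def by (simp add: finite_subset)
  then obtain \<epsilon> where "0 < \<epsilon>" and mono: "\<And>s. \<bar>s\<bar> \<le> \<epsilon> \<Longrightarrow> mono_on V (shift_level c s)"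
    using mono_on_shift_level by blast
  define zs where "zs s = shift_level c s \<circ> z" for s
  define ys where "ys s = shift_level c s y" for s
  have mem: "?P (zs s) (ys s) \<in> Qset d p1 p20 p21" if "\<bar>s\<bar> \<le> \<epsilon>" for s
    unfolding zs_def ys_def using gap \<open>p20 < p21\<close> z y split mono[OF that] c(1,2)
    by (intro upper_point_comp_mem_Qset) (auto simp: V_def shift_level_def)
  have "comb (1/2) (?P (zs (-\<epsilon>)) (ys (-\<epsilon>))) (?P (zs \<epsilon>) (ys \<epsilon>)) = ?P z y"
    unfolding comb_upper_point zs_def ys_def comp_def shift_level_midpoint ..
  moreover have "?P (zs (-\<epsilon>)) (ys (-\<epsilon>)) \<noteq> ?P (zs \<epsilon>) (ys \<epsilon>)"
    using c(3) \<open>0 < \<epsilon>\<close> by (auto simp: upper_point_def zs_def ys_def shift_level_def fun_eq_iff)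
  ultimately show ?thesis
    using mem \<open>0 < \<epsilon>\<close> v_eq by (intro not_vertex_of_midpoint) auto
qed

definition reflect :: "point \<Rightarrow> point" where
  "reflect v = (case v of (x1, x2, mu, z, y) \<Rightarrow> (x1, - x2, - mu, z, 1 - y))"

lemma reflect_reflect [simp]: "reflect (reflect v) = v"
  by (simp add: reflect_def split: prod.splits)

lemma reflect_comb: "reflect (comb t a b) = comb t (reflect a) (reflect b)"
  by (cases a rule: prod_cases5; cases b rule: prod_cases5) (simp add: reflect_def comb_def algebra_simps)

lemma binary_z_reflect: "binary_z d (reflect v) = binary_z d v"
  by (auto simp: reflect_def binary_z_def split: prod.splits)

lemma lower_mu_eq_neg_upper_mu:
  "lower_mu d p1 p20 p21 k z y = - upper_mu d p1 (- p21) (- p20) k z (1 - y)"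
proof -
  have "(\<Sum>j=1..d. gap p1 j * (if j \<le> k then z j + y - 1 else 0))
      + (\<Sum>j=1..d. gap p1 j * (if j \<le> k then 1 - y else z j)) = (\<Sum>j=1..d. gap p1 j * z j)"
    unfolding sum.distrib[symmetric] by (rule sum.cong) (auto simp: algebra_simps)
  then have sum_lower: "(\<Sum>j=1..d. gap p1 j * (if j \<le> k then z j + y - 1 else 0))
      = (\<Sum>j=1..d. gap p1 j * z j) - (\<Sum>j=1..d. gap p1 j * (if j \<le> k then 1 - y else z j))"
    by simp
  show ?thesis
    unfolding lower_mu_def upper_mu_def incremental_def sum_lower by (simp add: algebra_simps)
qed

lemma reflect_mem_Qset:
  assumes "v \<in> Qset d p1 p20 p21"
  shows "reflect v \<in> Qset d p1 (- p21) (- p20)"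
proof -
  obtain x1 x2 mu z y where v: "v = (x1, x2, mu, z, y)"
    by (cases v rule: prod_cases5)
  have reflected_bounds:
    "upper_mu d p1 (- p21) (- p20) k z (1 - y) = - lower_mu d p1 p20 p21 k z y"
    "lower_mu d p1 (- p21) (- p20) k z (1 - y) = - upper_mu d p1 p20 p21 k z y" for k
    using lower_mu_eq_neg_upper_mu[of d p1 p20 p21 k z y]
      lower_mu_eq_neg_upper_mu[of d p1 "- p21" "- p20" k z "1 - y"] by simp_all
  have "- x2 = - p21 + (- p20 - - p21) * (1 - y)" if "x2 = p20 + (p21 - p20) * y"
    using that by (simp add: algebra_simps)
  with assms show ?thesis
    unfolding v reflect_def mem_Qset_iff prod.case reflected_bounds by auto
qed

lemma vertex_of_reflect:
  assumes "vertex_of v (Qset d p1 p20 p21)"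
  shows "vertex_of (reflect v) (Qset d p1 (- p21) (- p20))"
  unfolding vertex_of_def
proof (intro conjI notI)
  show "reflect v \<in> Qset d p1 (- p21) (- p20)"
    using assms reflect_mem_Qset by (auto simp: vertex_of_def)
next
  assume "\<exists>a\<in>Qset d p1 (- p21) (- p20). \<exists>b\<in>Qset d p1 (- p21) (- p20).
      \<exists>t>0. t < 1 \<and> a \<noteq> b \<and> reflect v = comb t a b"
  then obtain a b t where ab: "a \<in> Qset d p1 (- p21) (- p20)" "b \<in> Qset d p1 (- p21) (- p20)"
    and t: "0 < t" "t < 1" and "a \<noteq> b" "reflect v = comb t a b"
    by blast
  have "reflect a \<in> Qset d p1 p20 p21" "reflect b \<in> Qset d p1 p20 p21"
    using reflect_mem_Qset[OF ab(1)] reflect_mem_Qset[OF ab(2)] by simp_all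
  moreover have "reflect a \<noteq> reflect b"
    using \<open>a \<noteq> b\<close> by (metis reflect_reflect)
  moreover have "v = comb t (reflect a) (reflect b)"
    using \<open>reflect v = comb t a b\<close> by (metis reflect_comb reflect_reflect)
  ultimately show False
    using assms t unfolding vertex_of_def by blast
qed

lemma not_vertex_of_if_lower_mu_tight:
  assumes gap: "\<forall>j\<in>{1..d}. 0 < gap p1 j" and "p20 < p21"
    and v: "(x1, x2, mu, z, y) \<in> Qset d p1 p20 p21"
    and fractional: "\<not> binary_z d (x1, x2, mu, z, y)"
    and "k0 \<le> d" and tight: "mu = lower_mu d p1 p20 p21 k0 z y"
  shows "\<not> vertex_of (x1, x2, mu, z, y) (Qset d p1 p20 p21)"
proof
  let ?v' = "reflect (x1, x2, mu, z, y)"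
  assume "vertex_of (x1, x2, mu, z, y) (Qset d p1 p20 p21)"
  then have "vertex_of ?v' (Qset d p1 (- p21) (- p20))"
    by (rule vertex_of_reflect)
  moreover have "\<not> vertex_of ?v' (Qset d p1 (- p21) (- p20))"
    unfolding reflect_def prod.case
  proof (rule not_vertex_of_if_upper_mu_tight[OF gap _ _ _ \<open>k0 \<le> d\<close>])
    show "(x1, - x2, - mu, z, 1 - y) \<in> Qset d p1 (- p21) (- p20)"
      using reflect_mem_Qset[OF v] by (simp add: reflect_def)
    show "\<not> binary_z d (x1, - x2, - mu, z, 1 - y)"
      using fractional binary_z_reflect[of d "(x1, x2, mu, z, y)"] by (simp add: reflect_def)
    show "- mu = upper_mu d p1 (- p21) (- p20) k0 z (1 - y)"
      using tight lower_mu_eq_neg_upper_mu by simp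
  qed (use \<open>p20 < p21\<close> in simp)
  ultimately show False by contradiction
qed

lemma is_ideal_Qset:
  assumes "\<forall>j\<in>{1..d}. 0 < gap p1 j" "p20 < p21"
  shows "is_ideal d (Qset d p1 p20 p21)"
  unfolding is_ideal_def
proof (intro allI impI)
  fix v assume vertex: "vertex_of v (Qset d p1 p20 p21)"
  obtain x1 x2 mu z y where v: "v = (x1, x2, mu, z, y)"
    by (cases v)
  have mem: "(x1, x2, mu, z, y) \<in> Qset d p1 p20 p21"
    using vertex v by (simp add: vertex_of_def)
  show "binary_z d v"
  proof (rule ccontr)
    assume "\<not> binary_z d v"
    then have fractional: "\<not> binary_z d (x1, x2, mu, z, y)"
      using v by simp
    have bounds: "\<forall>k\<in>{0..d}. lower_mu d p1 p20 p21 k z y \<le> mu \<and> mu \<le> upper_mu d p1 p20 p21 k z y"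
      using mem by (simp add: mem_Qset_iff)
    show False
    proof (cases "\<exists>k\<in>{0..d}. mu = upper_mu d p1 p20 p21 k z y \<or> mu = lower_mu d p1 p20 p21 k z y")
      case True
      then obtain k where "k \<le> d" "mu = upper_mu d p1 p20 p21 k z y \<or> mu = lower_mu d p1 p20 p21 k z y"
        by auto
      then show False
        using not_vertex_of_if_upper_mu_tight[OF assms mem fractional \<open>k \<le> d\<close>]
          not_vertex_of_if_lower_mu_tight[OF assms mem fractional \<open>k \<le> d\<close>] vertex v by blast
    next
      case False
      have "\<forall>k\<in>{0..d}. lower_mu d p1 p20 p21 k z y < mu \<and> mu < upper_mu d p1 p20 p21 k z y"
      proof
        fix k assume "k \<in> {0..d}"
        with bounds False show "lower_mu d p1 p20 p21 k z y < mu \<and> mu < upper_mu d p1 p20 p21 k z y"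
          by (metis order_le_neq_trans)
      qed
      then show False
        using not_vertex_of_if_bounds_strict[OF mem] vertex v by simp
    qed
  qed
qed

theorem proposition2:
  fixes d1 :: nat and p1 :: "nat \<Rightarrow> real" and p20 p21 :: real
  assumes "d1 \<ge> 1"
    and "\<And>j. j < d1 \<Longrightarrow> p1 j < p1 (Suc j)"
    and "p20 < p21"
  shows "is_MIP_formulation (Sset d1 p1 p20 p21) d1 (Qset d1 p1 p20 p21)
       \<and> is_ideal d1 (Qset d1 p1 p20 p21)"
proof -
  have gap: "\<forall>j\<in>{1..d1}. 0 < gap p1 j"
    using gap_pos[of d1 p1] assms(2) by blast
  then have "\<forall>j\<in>{1..d1}. 0 \<le> gap p1 j"
    by auto
  then show ?thesis
    using is_MIP_formulation_Qset is_ideal_Qset[OF gap] \<open>p20 < p21\<close> by auto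
qed

end
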